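(* Let $\phi\colon(\Gamma_1,X_1)\to(\Gamma_2,X_2)$ be a morphism in $\mathsf{SpatG}$. Define $\operatorname{Germ}(\phi)\colon\operatorname{Germ}(\Gamma_1,X_1)\to\operatorname{Germ}(\Gamma_2,X_2)$ by $\operatorname{Germ}(\phi)([\gamma,x])=[\gamma',\phi(x)]$, where $\gamma'\in\Gamma_2$ is any element with $\phi\circ\gamma=\gamma'\circ\phi$. Then $\operatorname{Germ}(\phi)$ is a well-defined étale homomorphism, and the assignments $(\Gamma,X)\mapsto\operatorname{Germ}(\Gamma,X)$, $\phi\mapsto\operatorname{Germ}(\phi)$ form a covariant functor $\mathsf{SpatG}\to\mathsf{Gpoid}$.
   Context: A Boolean space is a Hausdorff space with a basis of compact open sets; $\operatorname{Homeo}_c(X)$ is the set of homeomorphisms of $X$ whose support (closure of moved points) is compact open. The category $\mathsf{SpatG}$ has objects $(\Gamma,X)$ with $X$ Boolean and $\Gamma$ a subgroup of $\operatorname{Homeo}(X)$ contained in $\operatorname{Homeo}_c(X)$; a morphism $(\Gamma_1,X_1)\to(\Gamma_2,X_2)$ is a local homeomorphism $\phi\colon X_1\to X_2$ such that for each $\gamma\in\Gamma_1$ there is $\gamma'\in\Gamma_2$ with $\phi\circ\gamma=\gamma'\circ\phi$. The category $\mathsf{Gpoid}$ has objects ample (étale, unit space Hausdorff with basis of compact opens), effective (interior of isotropy equals unit space), Hausdorff groupoids, and morphisms étale homomorphisms (groupoid homomorphisms that are local homeomorphisms). The groupoid of germs $\operatorname{Germ}(\Gamma,X)$ is $\Gamma\times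 X$ modulo $(\gamma,x)\sim(\tau,y)$ iff $x=y$ and $\gamma,\tau$ agree near $x$; classes $[\gamma,x]$ with $s[\gamma,x]=x$, $r[\gamma,x]=\gamma(x)$, $[\tau,\gamma(x)][\gamma,x]=[\tau\gamma,x]$, $[\gamma,x]^{-1}=[\gamma^{-1},\gamma(x)]$, unit space $X$, topology with basis $\{[\gamma,x]:x\in A\}$ for $\gamma\in\Gamma$, $A$ open. *)

theory Defs
  imports "HOL-Analysis.Analysis"
begin

definition boolean_space :: "'a topology \<Rightarrow> bool" where
  "boolean_space X \<longleftrightarrow> Hausdorff_space X \<and>
     (\<forall>U x. openin X U \<and> x \<in> U \<longrightarrow>
        (\<exists>V. openin X V \<and> compactin X V \<and> x \<in> V \<and> V \<subseteq> U))"

text \<open>Homeomorphisms of X, represented as functions on the whole type that are the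
  identity outside the carrier of X.\<close>
definition Homeo :: "'a topology \<Rightarrow> ('a \<Rightarrow> 'a) set" where
  "Homeo X = {g. homeomorphic_map X X g \<and> (\<forall>x. x \<notin> topspace X \<longrightarrow> g x = x)}"

definition supp :: "'a topology \<Rightarrow> ('a \<Rightarrow> 'a) \<Rightarrow> 'a set" where
  "supp X g = X closure_of {x \<in> topspace X. g x \<noteq> x}"

definition Homeo_c :: "'a topology \<Rightarrow> ('a \<Rightarrow> 'a) set" where
  "Homeo_c X = {g \<in> Homeo X. compactin X (supp X g) \<and> openin X (supp X g)}"

definition local_homeo :: "'a topology \<Rightarrow> 'b topology \<Rightarrow> ('a \<Rightarrow> 'b) \<Rightarrow> bool" where
  "local_homeo X Y f \<longleftrightarrow> continuous_map X Y f \<and>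
     (\<forall>x \<in> topspace X. \<exists>U. openin X U \<and> x \<in> U \<and> openin Y (f ` U) \<and>
        homeomorphic_map (subtopology X U) (subtopology Y (f ` U)) f)"

definition spatg_obj :: "('a \<Rightarrow> 'a) set \<Rightarrow> 'a topology \<Rightarrow> bool" where
  "spatg_obj \<Gamma> X \<longleftrightarrow> boolean_space X \<and> \<Gamma> \<subseteq> Homeo_c X \<and> id \<in> \<Gamma> \<and>
     (\<forall>g\<in>\<Gamma>. \<forall>h\<in>\<Gamma>. g \<circ> h \<in> \<Gamma>) \<and> (\<forall>g\<in>\<Gamma>. inv g \<in> \<Gamma>)"

definition intertwines :: "'a topology \<Rightarrow> ('a \<Rightarrow> 'b) \<Rightarrow> ('a \<Rightarrow> 'a) \<Rightarrow> ('b \<Rightarrow> 'b) \<Rightarrow> bool" where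
  "intertwines X1 \<phi> g g' \<longleftrightarrow> (\<forall>y \<in> topspace X1. \<phi> (g y) = g' (\<phi> y))"

definition spatg_mor ::
  "('a \<Rightarrow> 'a) set \<Rightarrow> 'a topology \<Rightarrow> ('b \<Rightarrow> 'b) set \<Rightarrow> 'b topology \<Rightarrow> ('a \<Rightarrow> 'b) \<Rightarrow> bool" where
  "spatg_mor \<Gamma>1 X1 \<Gamma>2 X2 \<phi> \<longleftrightarrow> local_homeo X1 X2 \<phi> \<and>
     (\<forall>g\<in>\<Gamma>1. \<exists>g'\<in>\<Gamma>2. intertwines X1 \<phi> g g')"

record 'g tgpoid =
  garr :: "'g set"
  gtop :: "'g topology"
  gsrc :: "'g \<Rightarrow> 'g"
  grng :: "'g \<Rightarrow> 'g"
  gmul :: "'g \<Rightarrow> 'g \<Rightarrow> 'g"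
  ginv :: "'g \<Rightarrow> 'g"

definition gunits :: "'g tgpoid \<Rightarrow> 'g set" where
  "gunits G = gsrc G ` garr G"

definition groupoid :: "'g tgpoid \<Rightarrow> bool" where
  "groupoid G \<longleftrightarrow>
    (\<forall>g\<in>garr G. gsrc G g \<in> garr G \<and> grng G g \<in> garr G \<and> ginv G g \<in> garr G) \<and>
    (\<forall>g\<in>garr G. gsrc G (gsrc G g) = gsrc G g \<and> grng G (gsrc G g) = gsrc G g \<and>
                 gsrc G (grng G g) = grng G g \<and> grng G (grng G g) = grng G g) \<and>
    (\<forall>g\<in>garr G. \<forall>h\<in>garr G. gsrc G g = grng G h \<longrightarrow>
        gmul G g h \<in> garr G \<and> gsrc G (gmul G g h) = gsrc G h \<and> grng G (gmul G g h) = grng G g) \<and>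
    (\<forall>f\<in>garr G. \<forall>g\<in>garr G. \<forall>h\<in>garr G. gsrc G f = grng G g \<and> gsrc G g = grng G h \<longrightarrow>
        gmul G (gmul G f g) h = gmul G f (gmul G g h)) \<and>
    (\<forall>g\<in>garr G. gmul G g (gsrc G g) = g \<and> gmul G (grng G g) g = g) \<and>
    (\<forall>g\<in>garr G. gsrc G (ginv G g) = grng G g \<and> grng G (ginv G g) = gsrc G g \<and>
        gmul G (ginv G g) g = gsrc G g \<and> gmul G g (ginv G g) = grng G g)"

definition composable :: "'g tgpoid \<Rightarrow> ('g \<times> 'g) set" where
  "composable G = {(g, h). g \<in> garr G \<and> h \<in> garr G \<and> gsrc G g = grng G h}"

definition top_groupoid :: "'g tgpoid \<Rightarrow> bool" where
  "top_groupoid G \<longleftrightarrow> groupoid G \<and> topspace (gtop G) = garr G \<and>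
     continuous_map (gtop G) (gtop G) (gsrc G) \<and>
     continuous_map (gtop G) (gtop G) (grng G) \<and>
     continuous_map (gtop G) (gtop G) (ginv G) \<and>
     continuous_map (subtopology (prod_topology (gtop G) (gtop G)) (composable G)) (gtop G)
        (\<lambda>(g, h). gmul G g h)"

definition etale_groupoid :: "'g tgpoid \<Rightarrow> bool" where
  "etale_groupoid G \<longleftrightarrow> top_groupoid G \<and>
     local_homeo (gtop G) (subtopology (gtop G) (gunits G)) (gsrc G)"

definition ample :: "'g tgpoid \<Rightarrow> bool" where
  "ample G \<longleftrightarrow> etale_groupoid G \<and> boolean_space (subtopology (gtop G) (gunits G))"

definition isotropy :: "'g tgpoid \<Rightarrow> 'g set" where
  "isotropy G = {g \<in> garr G. gsrc G g = grng G g}"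

definition effective :: "'g tgpoid \<Rightarrow> bool" where
  "effective G \<longleftrightarrow> (gtop G) interior_of (isotropy G) = gunits G"

definition gpoid_obj :: "'g tgpoid \<Rightarrow> bool" where
  "gpoid_obj G \<longleftrightarrow> ample G \<and> effective G \<and> Hausdorff_space (gtop G)"

definition groupoid_hom :: "'g tgpoid \<Rightarrow> 'h tgpoid \<Rightarrow> ('g \<Rightarrow> 'h) \<Rightarrow> bool" where
  "groupoid_hom G H f \<longleftrightarrow> (\<forall>g\<in>garr G. f g \<in> garr H) \<and>
     (\<forall>g\<in>garr G. \<forall>h\<in>garr G. gsrc G g = grng G h \<longrightarrow>
        gsrc H (f g) = grng H (f h) \<and> f (gmul G g h) = gmul H (f g) (f h))"

definition etale_hom :: "'g tgpoid \<Rightarrow> 'h tgpoid \<Rightarrow> ('g \<Rightarrow> 'h) \<Rightarrow> bool" where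
  "etale_hom G H f \<longleftrightarrow> groupoid_hom G H f \<and> local_homeo (gtop G) (gtop H) f"

definition germ :: "('a \<Rightarrow> 'a) set \<Rightarrow> 'a topology \<Rightarrow> ('a \<Rightarrow> 'a) \<Rightarrow> 'a \<Rightarrow> (('a \<Rightarrow> 'a) \<times> 'a) set" where
  "germ \<Gamma> X g x = {(t, x) | t. t \<in> \<Gamma> \<and>
      (\<exists>U. openin X U \<and> x \<in> U \<and> (\<forall>y\<in>U. t y = g y))}"

definition germ_fn :: "(('a \<Rightarrow> 'a) \<times> 'a) set \<Rightarrow> ('a \<Rightarrow> 'a)" where
  "germ_fn c = fst (SOME p. p \<in> c)"

definition germ_pt :: "(('a \<Rightarrow> 'a) \<times> 'a) set \<Rightarrow> 'a" where
  "germ_pt c = snd (SOME p. p \<in> c)"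

definition Germ :: "('a \<Rightarrow> 'a) set \<Rightarrow> 'a topology \<Rightarrow> (('a \<Rightarrow> 'a) \<times> 'a) set tgpoid" where
  "Germ \<Gamma> X =
    \<lparr> garr = {germ \<Gamma> X g x | g x. g \<in> \<Gamma> \<and> x \<in> topspace X},
      gtop = topology_generated_by
               {{germ \<Gamma> X g x | x. x \<in> A} | g A. g \<in> \<Gamma> \<and> openin X A},
      gsrc = (\<lambda>c. germ \<Gamma> X id (germ_pt c)),
      grng = (\<lambda>c. germ \<Gamma> X id (germ_fn c (germ_pt c))),
      gmul = (\<lambda>c d. germ \<Gamma> X (germ_fn c \<circ> germ_fn d) (germ_pt d)),
      ginv = (\<lambda>c. germ \<Gamma> X (inv (germ_fn c)) (germ_fn c (germ_pt c))) \<rparr>"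

definition Germ_map ::
  "('a \<Rightarrow> 'a) set \<Rightarrow> 'a topology \<Rightarrow> ('b \<Rightarrow> 'b) set \<Rightarrow> 'b topology \<Rightarrow> ('a \<Rightarrow> 'b)
   \<Rightarrow> (('a \<Rightarrow> 'a) \<times> 'a) set \<Rightarrow> (('b \<Rightarrow> 'b) \<times> 'b) set" where
  "Germ_map \<Gamma>1 X1 \<Gamma>2 X2 \<phi> c =
     germ \<Gamma>2 X2 (SOME g'. g' \<in> \<Gamma>2 \<and> intertwines X1 \<phi> (germ_fn c) g') (\<phi> (germ_pt c))"

end

theory Submission
  imports Defs
begin

text \<open>A germ \<open>[g, x]\<close> only remembers \<open>x\<close> and the behaviour of \<open>g\<close> near \<open>x\<close>. Hence the sets
  \<open>[g, A] = germ \<Gamma> X g ` A\<close> with \<open>A\<close> open form a basis of the germ topology, and on each of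
  them \<open>germ_pt\<close> is a homeomorphism onto \<open>A\<close> with inverse \<open>germ \<Gamma> X g\<close>. In these charts the
  source map is \<open>germ \<Gamma> X id \<circ> germ_pt\<close> and the other structure maps are built from elements
  of \<open>\<Gamma>\<close>, so the groupoid is ample with unit space homeomorphic to \<open>X\<close>. It is Hausdorff
  because supports are clopen, and effective because a basic set \<open>[g, A]\<close> of isotropy germs
  forces \<open>g = id\<close> on \<open>A\<close>. A morphism \<open>\<phi>\<close> is an open map, so intertwiners of maps that agree
  near \<open>x\<close> agree near \<open>\<phi> x\<close>: this makes \<open>Germ(\<phi>)\<close> well defined, and in the charts it is
  \<open>\<phi>\<close> itself, hence a local homeomorphism.\<close>

lemma openin_topology_generated_by_base:
  assumes refine: "\<And>i j x. i \<in> I \<Longrightarrow> j \<in> I \<Longrightarrow> x \<in> B i \<inter> B j \<Longrightarrow>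
                     \<exists>k\<in>I. x \<in> B k \<and> B k \<subseteq> B i \<inter> B j"
  shows "openin (topology_generated_by (B ` I)) W \<longleftrightarrow> (\<forall>x\<in>W. \<exists>i\<in>I. x \<in> B i \<and> B i \<subseteq> W)"
proof
  assume "openin (topology_generated_by (B ` I)) W"
  then have "generate_topology_on (B ` I) W" by (rule openin_topology_generated_by)
  then show "\<forall>x\<in>W. \<exists>i\<in>I. x \<in> B i \<and> B i \<subseteq> W"
  proof (induction rule: generate_topology_on.induct)
    case Empty
    then show ?case by simp
  next
    case (Int a b)
    show ?case
    proof
      fix x assume x: "x \<in> a \<inter> b"
      obtain i where i: "i \<in> I" "x \<in> B i" "B i \<subseteq> a" using Int.IH(1) x by blast
      obtain j where j: "j \<in> I" "x \<in> B j" "B j \<subseteq> b" using Int.IH(2) x by blast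
      obtain k where "k \<in> I" "x \<in> B k" "B k \<subseteq> B i \<inter> B j"
        using refine[OF i(1) j(1)] i(2) j(2) by blast
      then show "\<exists>k\<in>I. x \<in> B k \<and> B k \<subseteq> a \<inter> b" using i(3) j(3) by blast
    qed
  next
    case (UN K)
    then show ?case by (meson UnionE Union_upper order_trans)
  next
    case (Basis s)
    then show ?case by blast
  qed
next
  assume "\<forall>x\<in>W. \<exists>i\<in>I. x \<in> B i \<and> B i \<subseteq> W"
  then show "openin (topology_generated_by (B ` I)) W"
    by (subst openin_subopen) (meson imageI topology_generated_by_Basis)
qed

lemma local_homeo_imp_open_map:
  assumes "local_homeo X Y f"
  shows "open_map X Y f"
  unfolding open_map_def
proof (intro allI impI)
  fix U assume U: "openin X U"
  show "openin Y (f ` U)"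
  proof (subst openin_subopen, intro ballI)
    fix z assume "z \<in> f ` U"
    then obtain x where x: "x \<in> U" "z = f x" by blast
    then obtain V where V: "openin X V" "x \<in> V" "openin Y (f ` V)"
        "homeomorphic_map (subtopology X V) (subtopology Y (f ` V)) f"
      using assms openin_subset[OF U] unfolding local_homeo_def by blast
    have "open_map (subtopology X V) Y f"
      using open_map_from_open_subtopology[OF V(3) homeomorphic_imp_open_map[OF V(4)]] .
    then have "openin Y (f ` (V \<inter> U))"
      using U by (simp add: open_map_def openin_subtopology_Int2)
    then show "\<exists>T. openin Y T \<and> z \<in> T \<and> T \<subseteq> f ` U" using x V(2) by blast
  qed
qed

lemma boolean_space_homeomorphic_image:
  assumes f: "homeomorphic_map X Y f" and X: "boolean_space X"
  shows "boolean_space Y"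
  unfolding boolean_space_def
proof (intro conjI allI impI)
  show "Hausdorff_space Y"
    using X homeomorphic_Hausdorff_space homeomorphic_map_imp_homeomorphic_space[OF f]
    unfolding boolean_space_def by blast
  fix U y assume Uy: "openin Y U \<and> y \<in> U"
  have fX: "f ` topspace X = topspace Y" and cf: "continuous_map X Y f"
    using f homeomorphic_imp_surjective_map homeomorphic_imp_continuous_map by blast+
  have "y \<in> f ` topspace X" using Uy openin_subset[of Y U] fX by auto
  then obtain x where x: "x \<in> topspace X" "f x = y" by blast
  have "openin X {x \<in> topspace X. f x \<in> U}"
    using openin_continuous_map_preimage[OF cf] Uy by blast
  moreover have "x \<in> {x \<in> topspace X. f x \<in> U}" using x Uy by simp
  ultimately obtain V where V: "openin X V" "compactin X V" "x \<in> V" "V \<subseteq> {x \<in> topspace X. f x \<in> U}"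
    using X unfolding boolean_space_def by blast
  have "openin Y (f ` V)"
    using homeomorphic_imp_open_map[OF f] V(1) by (simp add: open_map_def)
  moreover have "compactin Y (f ` V)" using image_compactin[OF V(2) cf] .
  ultimately show "\<exists>V. openin Y V \<and> compactin Y V \<and> y \<in> V \<and> V \<subseteq> U"
    using V(3,4) x(2) by blast
qed

section \<open>Germs\<close>

definition agree_near :: "'a topology \<Rightarrow> ('a \<Rightarrow> 'b) \<Rightarrow> ('a \<Rightarrow> 'b) \<Rightarrow> 'a \<Rightarrow> bool" where
  "agree_near X g h x \<longleftrightarrow> (\<exists>U. openin X U \<and> x \<in> U \<and> (\<forall>y\<in>U. g y = h y))"

lemma agree_nearI: "openin X U \<Longrightarrow> x \<in> U \<Longrightarrow> (\<And>y. y \<in> U \<Longrightarrow> g y = h y) \<Longrightarrow> agree_near X g h x"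
  unfolding agree_near_def by blast

lemma agree_near_refl: "x \<in> topspace X \<Longrightarrow> agree_near X g g x"
  unfolding agree_near_def by blast

lemma agree_near_sym: "agree_near X g h x \<Longrightarrow> agree_near X h g x"
  unfolding agree_near_def by metis

lemma agree_near_trans: "agree_near X f g x \<Longrightarrow> agree_near X g h x \<Longrightarrow> agree_near X f h x"
  unfolding agree_near_def by (metis IntD1 IntD2 IntI openin_Int)

lemma agree_near_imp_eq: "agree_near X g h x \<Longrightarrow> g x = h x"
  unfolding agree_near_def by blast

lemma agree_near_compose:
  assumes "continuous_map X X h2" "agree_near X g1 g2 (h2 x)" "agree_near X h1 h2 x"
  shows "agree_near X (g1 \<circ> h1) (g2 \<circ> h2) x"
proof -
  obtain U where U: "openin X U" "x \<in> U" "\<forall>y\<in>U. h1 y = h2 y"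
    using assms(3) unfolding agree_near_def by blast
  obtain V where V: "openin X V" "h2 x \<in> V" "\<forall>y\<in>V. g1 y = g2 y"
    using assms(2) unfolding agree_near_def by blast
  show ?thesis
  proof (rule agree_nearI)
    show "openin X (U \<inter> {y \<in> topspace X. h2 y \<in> V})"
      using U(1) openin_continuous_map_preimage[OF assms(1) V(1)] by blast
  qed (use U V openin_subset[OF U(1)] in auto)
qed

lemma continuous_map_locally:
  assumes "\<And>x. x \<in> topspace X \<Longrightarrow> \<exists>U. openin X U \<and> x \<in> U \<and> continuous_map (subtopology X U) Y f"
  shows "continuous_map X Y f"
proof -
  obtain U where U: "\<And>x. x \<in> topspace X \<Longrightarrow>
      openin X (U x) \<and> x \<in> U x \<and> continuous_map (subtopology X (U x)) Y f"
    using assms by metis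
  show ?thesis
    by (rule pasting_lemma[of "topspace X" X U Y "\<lambda>_. f"]) (use U in auto)
qed

lemma intertwines_id: "intertwines X id g g"
  by (simp add: intertwines_def)

lemma intertwines_compose:
  assumes "intertwines X \<phi> g g'" "intertwines X \<phi> h h'" "h \<in> topspace X \<rightarrow> topspace X"
  shows "intertwines X \<phi> (g \<circ> h) (g' \<circ> h')"
  using assms by (simp add: intertwines_def Pi_iff)

lemma intertwines_compose_maps:
  assumes "intertwines X1 \<phi> g g'" "intertwines X2 \<psi> g' g''" "\<phi> \<in> topspace X1 \<rightarrow> topspace X2"
  shows "intertwines X1 (\<psi> \<circ> \<phi>) g g''"
  using assms by (auto simp: intertwines_def)

lemma agree_near_intertwiners:
  assumes "open_map X1 X2 \<phi>" "agree_near X1 g h x"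
    and "intertwines X1 \<phi> g g'" "intertwines X1 \<phi> h h'"
  shows "agree_near X2 g' h' (\<phi> x)"
proof -
  obtain U where U: "openin X1 U" "x \<in> U" "\<forall>y\<in>U. g y = h y"
    using assms(2) unfolding agree_near_def by blast
  show ?thesis
  proof (rule agree_nearI)
    show "openin X2 (\<phi> ` U)" using assms(1) U(1) by (simp add: open_map_def)
    fix z assume "z \<in> \<phi> ` U"
    then obtain y where y: "y \<in> U" "z = \<phi> y" by blast
    then have "y \<in> topspace X1" using openin_subset[OF U(1)] by blast
    then have "g' z = \<phi> (g y)" "\<phi> (h y) = h' z"
      using assms(3,4) y(2) by (simp_all add: intertwines_def)
    then show "g' z = h' z" using U(3) y(1) by simp
  qed (use U in blast)
qed

lemma mem_germ_iff: "p \<in> germ \<Gamma> X g x \<longleftrightarrow> snd p = x \<and> fst p \<in> \<Gamma> \<and> agree_near X (fst p) g x"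
  unfolding germ_def agree_near_def by (cases p) auto

lemma germ_eq_iff:
  assumes "g \<in> \<Gamma>" "x \<in> topspace X"
  shows "germ \<Gamma> X g x = germ \<Gamma> X h y \<longleftrightarrow> x = y \<and> agree_near X g h x"
proof
  assume "germ \<Gamma> X g x = germ \<Gamma> X h y"
  moreover have "(g, x) \<in> germ \<Gamma> X g x" using assms by (simp add: mem_germ_iff agree_near_refl)
  ultimately show "x = y \<and> agree_near X g h x" by (simp add: mem_germ_iff)
next
  assume "x = y \<and> agree_near X g h x"
  then show "germ \<Gamma> X g x = germ \<Gamma> X h y"
    by (auto simp: mem_germ_iff) (meson agree_near_trans agree_near_sym)+
qed

lemma germ_eqI: "g \<in> \<Gamma> \<Longrightarrow> x \<in> topspace X \<Longrightarrow> agree_near X g h x \<Longrightarrow> germ \<Gamma> X g x = germ \<Gamma> X h x"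
  by (simp add: germ_eq_iff)

lemma
  assumes "g \<in> \<Gamma>" "x \<in> topspace X"
  shows germ_pt_germ [simp]: "germ_pt (germ \<Gamma> X g x) = x"
    and germ_fn_germ_in: "germ_fn (germ \<Gamma> X g x) \<in> \<Gamma>"
    and agree_near_germ_fn: "agree_near X (germ_fn (germ \<Gamma> X g x)) g x"
proof -
  have "(g, x) \<in> germ \<Gamma> X g x" using assms by (simp add: mem_germ_iff agree_near_refl)
  then have "(SOME p. p \<in> germ \<Gamma> X g x) \<in> germ \<Gamma> X g x" by (rule someI)
  then show "germ_pt (germ \<Gamma> X g x) = x" "germ_fn (germ \<Gamma> X g x) \<in> \<Gamma>"
    "agree_near X (germ_fn (germ \<Gamma> X g x)) g x"
    unfolding germ_pt_def germ_fn_def by (simp_all add: mem_germ_iff)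
qed

lemma Germ_map_germ:
  assumes "continuous_map X1 X2 \<phi>" "open_map X1 X2 \<phi>"
    and intertwiners: "\<forall>g\<in>\<Gamma>1. \<exists>g'\<in>\<Gamma>2. intertwines X1 \<phi> g g'"
    and g: "g \<in> \<Gamma>1" and x: "x \<in> topspace X1" and g': "g' \<in> \<Gamma>2" "intertwines X1 \<phi> g g'"
  shows "Germ_map \<Gamma>1 X1 \<Gamma>2 X2 \<phi> (germ \<Gamma>1 X1 g x) = germ \<Gamma>2 X2 g' (\<phi> x)"
proof -
  define t where "t = germ_fn (germ \<Gamma>1 X1 g x)"
  define t' where "t' = (SOME t'. t' \<in> \<Gamma>2 \<and> intertwines X1 \<phi> t t')"
  have "t \<in> \<Gamma>1" "agree_near X1 t g x"
    using germ_fn_germ_in[OF g x] agree_near_germ_fn[OF g x] by (simp_all add: t_def)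
  then have t': "t' \<in> \<Gamma>2" "intertwines X1 \<phi> t t'"
    using someI_ex[of "\<lambda>t'. t' \<in> \<Gamma>2 \<and> intertwines X1 \<phi> t t'"] intertwiners
    unfolding t'_def by blast+
  have "agree_near X2 t' g' (\<phi> x)"
    using agree_near_intertwiners[OF assms(2) \<open>agree_near X1 t g x\<close> t'(2) g'(2)] .
  moreover have "\<phi> x \<in> topspace X2"
    using assms(1) x by (meson continuous_map_image_subset_topspace image_subset_iff)
  ultimately have "germ \<Gamma>2 X2 t' (\<phi> x) = germ \<Gamma>2 X2 g' (\<phi> x)"
    using germ_eqI[OF t'(1)] by blast
  then show ?thesis
    by (simp add: Germ_map_def g x t_def[symmetric] t'_def[symmetric])
qed

lemma garr_Germ: "garr (Germ \<Gamma> X) = {germ \<Gamma> X g x | g x. g \<in> \<Gamma> \<and> x \<in> topspace X}"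
  by (simp add: Germ_def)

lemma germ_in_garr [simp]: "g \<in> \<Gamma> \<Longrightarrow> x \<in> topspace X \<Longrightarrow> germ \<Gamma> X g x \<in> garr (Germ \<Gamma> X)"
  by (auto simp: garr_Germ)

lemma garr_GermE:
  assumes "c \<in> garr (Germ \<Gamma> X)"
  obtains g x where "g \<in> \<Gamma>" "x \<in> topspace X" "c = germ \<Gamma> X g x"
  using assms by (auto simp: garr_Germ)

lemma ball_garr_Germ: "(\<forall>c\<in>garr (Germ \<Gamma> X). P c) \<longleftrightarrow> (\<forall>g\<in>\<Gamma>. \<forall>x\<in>topspace X. P (germ \<Gamma> X g x))"
  by (auto simp: garr_Germ)

section \<open>The groupoid of germs\<close>

locale spatg_object =
  fixes \<Gamma> :: "('a \<Rightarrow> 'a) set" and X :: "'a topology"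
  assumes spatg_obj: "spatg_obj \<Gamma> X"
begin

abbreviation "\<G> \<equiv> Germ \<Gamma> X"

lemma Gamma_id [simp]: "id \<in> \<Gamma>"
  and Gamma_comp: "g \<in> \<Gamma> \<Longrightarrow> h \<in> \<Gamma> \<Longrightarrow> g \<circ> h \<in> \<Gamma>"
  and Gamma_inv: "g \<in> \<Gamma> \<Longrightarrow> inv g \<in> \<Gamma>"
  and boolean_space_X: "boolean_space X"
  using spatg_obj by (simp_all add: spatg_obj_def)

lemma
  assumes "g \<in> \<Gamma>"
  shows Gamma_homeomorphic: "homeomorphic_map X X g"
    and Gamma_fixes_outside: "x \<notin> topspace X \<Longrightarrow> g x = x"
    and openin_supp: "openin X (supp X g)"
  using assms spatg_obj by (auto simp: spatg_obj_def Homeo_c_def Homeo_def)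

lemma Gamma_continuous: "g \<in> \<Gamma> \<Longrightarrow> continuous_map X X g"
  using Gamma_homeomorphic homeomorphic_imp_continuous_map by blast

lemma Gamma_in_topspace [simp]: "g \<in> \<Gamma> \<Longrightarrow> x \<in> topspace X \<Longrightarrow> g x \<in> topspace X"
  using Gamma_continuous continuous_map_image_subset_topspace by blast

lemma Gamma_bij: 
  assumes "g \<in> \<Gamma>"
  shows "bij g"
proof -
  have "bij_betw g (topspace X) (topspace X)"
    using Gamma_homeomorphic[OF assms]
    by (simp add: bij_betw_def homeomorphic_imp_injective_map homeomorphic_imp_surjective_map)
  moreover have "bij_betw g (- topspace X) (- topspace X)"
    using Gamma_fixes_outside[OF assms] bij_betw_cong[of "- topspace X" g id] by simp
  ultimately show ?thesis
    using bij_betw_combine[of g "topspace X" "topspace X" "- topspace X" "- topspace X"] by simp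
qed

lemma inv_Gamma_apply [simp]: "g \<in> \<Gamma> \<Longrightarrow> inv g (g x) = x"
  and Gamma_apply_inv [simp]: "g \<in> \<Gamma> \<Longrightarrow> g (inv g x) = x"
  and inv_Gamma_comp [simp]: "g \<in> \<Gamma> \<Longrightarrow> inv g \<circ> g = id"
  and Gamma_comp_inv [simp]: "g \<in> \<Gamma> \<Longrightarrow> g \<circ> inv g = id"
  using Gamma_bij by (simp_all add: bij_def surj_f_inv_f inv_f_f fun_eq_iff)

lemma openin_Gamma_image: "g \<in> \<Gamma> \<Longrightarrow> openin X A \<Longrightarrow> openin X (g ` A)"
  using Gamma_homeomorphic homeomorphic_imp_open_map open_map_def by blast

lemma germ_id_eq_iff [simp]: "x \<in> topspace X \<Longrightarrow> germ \<Gamma> X id x = germ \<Gamma> X id y \<longleftrightarrow> x = y"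
  by (simp add: germ_eq_iff agree_near_refl)

lemma gsrc_germ [simp]: "g \<in> \<Gamma> \<Longrightarrow> x \<in> topspace X \<Longrightarrow> gsrc \<G> (germ \<Gamma> X g x) = germ \<Gamma> X id x"
  by (simp add: Germ_def)

lemma grng_germ [simp]: "g \<in> \<Gamma> \<Longrightarrow> x \<in> topspace X \<Longrightarrow> grng \<G> (germ \<Gamma> X g x) = germ \<Gamma> X id (g x)"
  by (simp add: Germ_def agree_near_imp_eq[OF agree_near_germ_fn])

lemma gmul_germ [simp]:
  assumes "g \<in> \<Gamma>" "h \<in> \<Gamma>" "y \<in> topspace X" "x = h y"
  shows "gmul \<G> (germ \<Gamma> X g x) (germ \<Gamma> X h y) = germ \<Gamma> X (g \<circ> h) y"
proof -
  let ?g = "germ_fn (germ \<Gamma> X g x)" and ?h = "germ_fn (germ \<Gamma> X h y)"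
  have x: "x \<in> topspace X" using assms by simp
  have "agree_near X ?g g (h y)" using agree_near_germ_fn[OF assms(1) x] assms(4) by simp
  then have "agree_near X (?g \<circ> ?h) (g \<circ> h) y"
    by (rule agree_near_compose[OF Gamma_continuous[OF assms(2)] _ agree_near_germ_fn[OF assms(2,3)]])
  then have "germ \<Gamma> X (?g \<circ> ?h) y = germ \<Gamma> X (g \<circ> h) y"
    using germ_eqI[OF _ assms(3)] assms x by (simp add: Gamma_comp germ_fn_germ_in)
  then show ?thesis using assms x by (simp add: Germ_def)
qed

lemma ginv_germ [simp]:
  assumes "g \<in> \<Gamma>" "x \<in> topspace X"
  shows "ginv \<G> (germ \<Gamma> X g x) = germ \<Gamma> X (inv g) (g x)"
proof -
  let ?g = "germ_fn (germ \<Gamma> X g x)"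
  obtain U where U: "openin X U" "x \<in> U" "\<forall>y\<in>U. ?g y = g y"
    using agree_near_germ_fn[OF assms] unfolding agree_near_def by blast
  have g: "?g \<in> \<Gamma>" using germ_fn_germ_in[OF assms] .
  have agree: "agree_near X (inv ?g) (inv g) (g x)"
  proof (rule agree_nearI)
    show "openin X (g ` U)" using openin_Gamma_image[OF assms(1) U(1)] .
    fix z assume "z \<in> g ` U"
    then obtain y where "y \<in> U" "z = g y" by blast
    then show "inv ?g z = inv g z" using U(3) g assms(1) by (metis inv_Gamma_apply)
  qed (use U in blast)
  have "germ \<Gamma> X (inv ?g) (g x) = germ \<Gamma> X (inv g) (g x)"
    using germ_eqI[OF Gamma_inv[OF g] _ agree] assms by simp
  then show ?thesis
    using assms agree_near_imp_eq[OF agree_near_germ_fn[OF assms]] by (simp add: Germ_def)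
qed

lemma groupoid_Germ: "groupoid \<G>"
  unfolding groupoid_def ball_garr_Germ
  by (simp add: Gamma_comp Gamma_inv comp_assoc)

lemma gtop_Germ:
  "gtop \<G> = topology_generated_by ((\<lambda>(g, A). germ \<Gamma> X g ` A) ` (\<Gamma> \<times> Collect (openin X)))"
proof -
  have "{{germ \<Gamma> X g x | x. x \<in> A} | g A. g \<in> \<Gamma> \<and> openin X A}
      = (\<lambda>(g, A). germ \<Gamma> X g ` A) ` (\<Gamma> \<times> Collect (openin X))"
    unfolding Setcompr_eq_image by (auto simp: image_iff)
  then show ?thesis by (simp add: Germ_def)
qed

lemma openin_germ_image:
  assumes "g \<in> \<Gamma>" "openin X A"
  shows "openin (gtop \<G>) (germ \<Gamma> X g ` A)"
  unfolding gtop_Germ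
  by (rule topology_generated_by_Basis, rule image_eqI[where x="(g, A)"]) (simp_all add: assms)

lemma topspace_Germ: "topspace (gtop \<G>) = garr \<G>"
proof -
  have "(\<Union>(g, A)\<in>\<Gamma> \<times> Collect (openin X). germ \<Gamma> X g ` A) = garr \<G>"
  proof (intro equalityI subsetI)
    fix c assume "c \<in> (\<Union>(g, A)\<in>\<Gamma> \<times> Collect (openin X). germ \<Gamma> X g ` A)"
    then obtain g A where "g \<in> \<Gamma>" "openin X A" "c \<in> germ \<Gamma> X g ` A" by blast
    then show "c \<in> garr \<G>" using openin_subset[of X A] by auto
  next
    fix c assume "c \<in> garr \<G>"
    then obtain g x where "g \<in> \<Gamma>" "x \<in> topspace X" "c = germ \<Gamma> X g x" by (rule garr_GermE)
    then show "c \<in> (\<Union>(g, A)\<in>\<Gamma> \<times> Collect (openin X). germ \<Gamma> X g ` A)"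
      using openin_topspace[of X] by blast
  qed
  then show ?thesis unfolding gtop_Germ topology_generated_by_topspace by simp
qed

lemma germ_image_refine:
  assumes g1: "g1 \<in> \<Gamma>" and "g2 \<in> \<Gamma>" "openin X A1" "openin X A2"
    and c: "c \<in> germ \<Gamma> X g1 ` A1 \<inter> germ \<Gamma> X g2 ` A2"
  obtains A where "openin X A" "c \<in> germ \<Gamma> X g1 ` A"
    "germ \<Gamma> X g1 ` A \<subseteq> germ \<Gamma> X g1 ` A1 \<inter> germ \<Gamma> X g2 ` A2"
proof -
  obtain x x' where x: "x \<in> A1" "x' \<in> A2" "c = germ \<Gamma> X g1 x" "c = germ \<Gamma> X g2 x'"
    using c by blast
  moreover have "x \<in> topspace X" using x(1) openin_subset[OF assms(3)] by blast
  ultimately have "x = x'" "agree_near X g1 g2 x" using germ_eq_iff[OF g1] by metis+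
  then obtain U where U: "openin X U" "x \<in> U" "\<forall>y\<in>U. g1 y = g2 y"
    unfolding agree_near_def by blast
  have "germ \<Gamma> X g1 y = germ \<Gamma> X g2 y" if "y \<in> A1 \<inter> A2 \<inter> U" for y
    using that U openin_subset[OF assms(3)] by (intro germ_eqI[OF g1] agree_nearI[OF U(1)]) auto
  then have "germ \<Gamma> X g1 ` (A1 \<inter> A2 \<inter> U) \<subseteq> germ \<Gamma> X g1 ` A1 \<inter> germ \<Gamma> X g2 ` A2"
    by auto
  moreover have "openin X (A1 \<inter> A2 \<inter> U)" using assms(3,4) U(1) by blast
  moreover have "c \<in> germ \<Gamma> X g1 ` (A1 \<inter> A2 \<inter> U)" using x \<open>x = x'\<close> U(2) by blast
  ultimately show ?thesis by (meson that)
qed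

lemma openin_Germ_iff:
  "openin (gtop \<G>) W \<longleftrightarrow>
     (\<forall>c\<in>W. \<exists>g\<in>\<Gamma>. \<exists>A. openin X A \<and> c \<in> germ \<Gamma> X g ` A \<and> germ \<Gamma> X g ` A \<subseteq> W)"
proof -
  let ?B = "\<lambda>(g, A). germ \<Gamma> X g ` A"
  have refine: "\<exists>k\<in>\<Gamma> \<times> Collect (openin X). c \<in> ?B k \<and> ?B k \<subseteq> ?B i \<inter> ?B j"
    if ij: "i \<in> \<Gamma> \<times> Collect (openin X)" "j \<in> \<Gamma> \<times> Collect (openin X)"
      and c: "c \<in> ?B i \<inter> ?B j" for i j c
  proof -
    obtain g1 A1 g2 A2 where "i = (g1, A1)" "j = (g2, A2)" "g1 \<in> \<Gamma>" "g2 \<in> \<Gamma>"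
      "openin X A1" "openin X A2"
      using ij by auto
    moreover obtain A where "openin X A" "c \<in> germ \<Gamma> X g1 ` A"
      "germ \<Gamma> X g1 ` A \<subseteq> germ \<Gamma> X g1 ` A1 \<inter> germ \<Gamma> X g2 ` A2"
      using germ_image_refine[of g1 g2 A1 A2 c] calculation c by auto
    ultimately show ?thesis by (intro bexI[of _ "(g1, A)"]) auto
  qed
  have "openin (gtop \<G>) W \<longleftrightarrow> (\<forall>c\<in>W. \<exists>k\<in>\<Gamma> \<times> Collect (openin X). c \<in> ?B k \<and> ?B k \<subseteq> W)"
    unfolding gtop_Germ by (rule openin_topology_generated_by_base[OF refine])
  then show ?thesis by simp
qed

lemma openin_GermE:
  assumes "openin (gtop \<G>) W" "c \<in> W"
  obtains g A where "g \<in> \<Gamma>" "openin X A" "c \<in> germ \<Gamma> X g ` A" "germ \<Gamma> X g ` A \<subseteq> W"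
  using assms unfolding openin_Germ_iff by fast

lemma continuous_map_germ:
  assumes g: "g \<in> \<Gamma>"
  shows "continuous_map X (gtop \<G>) (germ \<Gamma> X g)"
  unfolding continuous_map_def
proof (intro conjI Pi_I allI impI)
  show "germ \<Gamma> X g y \<in> topspace (gtop \<G>)" if "y \<in> topspace X" for y
    using that g by (simp add: topspace_Germ)
  fix W assume W: "openin (gtop \<G>) W"
  show "openin X {y \<in> topspace X. germ \<Gamma> X g y \<in> W}"
  proof (subst openin_subopen, intro ballI)
    fix y assume "y \<in> {y \<in> topspace X. germ \<Gamma> X g y \<in> W}"
    then have y: "y \<in> topspace X" "germ \<Gamma> X g y \<in> W" by simp_all
    obtain h A where hA: "h \<in> \<Gamma>" "openin X A" "germ \<Gamma> X g y \<in> germ \<Gamma> X h ` A"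
        "germ \<Gamma> X h ` A \<subseteq> W"
      using openin_GermE[OF W y(2)] .
    then obtain z where "z \<in> A" "germ \<Gamma> X g y = germ \<Gamma> X h z" by blast
    then have "y \<in> A" "agree_near X g h y" using germ_eq_iff[OF g y(1)] by auto
    then obtain U where U: "openin X U" "y \<in> U" "\<forall>z\<in>U. g z = h z"
      unfolding agree_near_def by blast
    have "germ \<Gamma> X g z \<in> W" if z: "z \<in> U \<inter> A" for z
    proof -
      have "germ \<Gamma> X g z = germ \<Gamma> X h z"
        using z U openin_subset[OF U(1)] by (intro germ_eqI[OF g] agree_nearI[OF U(1)]) auto
      then show ?thesis using z hA(4) by blast
    qed
    then have "U \<inter> A \<subseteq> {y \<in> topspace X. germ \<Gamma> X g y \<in> W}"
      using openin_subset[OF U(1)] by blast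
    then show "\<exists>T. openin X T \<and> y \<in> T \<and> T \<subseteq> {y \<in> topspace X. germ \<Gamma> X g y \<in> W}"
      using openin_Int[OF U(1) hA(2)] U(2) \<open>y \<in> A\<close> by blast
  qed
qed

lemma continuous_map_germ_pt: "continuous_map (gtop \<G>) X germ_pt"
  unfolding continuous_map_def
proof (intro conjI Pi_I allI impI)
  show "germ_pt c \<in> topspace X" if "c \<in> topspace (gtop \<G>)" for c
    using that by (auto simp: topspace_Germ elim!: garr_GermE)
  fix A assume A: "openin X A"
  have "{c \<in> topspace (gtop \<G>). germ_pt c \<in> A} = (\<Union>g\<in>\<Gamma>. germ \<Gamma> X g ` A)"
    using openin_subset[OF A] by (auto simp: topspace_Germ elim!: garr_GermE)
  then show "openin (gtop \<G>) {c \<in> topspace (gtop \<G>). germ_pt c \<in> A}"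
    using openin_germ_image A by auto
qed

lemma homeomorphic_maps_germ_image:
  assumes "g \<in> \<Gamma>" "A \<subseteq> topspace X"
  shows "homeomorphic_maps (subtopology X A) (subtopology (gtop \<G>) (germ \<Gamma> X g ` A))
           (germ \<Gamma> X g) germ_pt"
  using assms continuous_map_germ[OF assms(1)] continuous_map_germ_pt
  by (auto simp: homeomorphic_maps_def continuous_map_in_subtopology continuous_map_from_subtopology
      topspace_Germ)

lemma continuous_map_from_Germ:
  assumes "\<And>g. g \<in> \<Gamma> \<Longrightarrow> continuous_map X Y (\<lambda>y. f (germ \<Gamma> X g y))"
  shows "continuous_map (gtop \<G>) Y f"
proof (rule continuous_map_locally)
  fix c assume "c \<in> topspace (gtop \<G>)"
  then obtain g x where gx: "g \<in> \<Gamma>" "x \<in> topspace X" "c = germ \<Gamma> X g x"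
    by (auto simp: topspace_Germ elim: garr_GermE)
  let ?U = "germ \<Gamma> X g ` topspace X"
  have "continuous_map (subtopology (gtop \<G>) ?U) Y ((\<lambda>y. f (germ \<Gamma> X g y)) \<circ> germ_pt)"
    using continuous_map_from_subtopology[OF continuous_map_germ_pt] assms[OF gx(1)]
    by (rule continuous_map_compose)
  then have "continuous_map (subtopology (gtop \<G>) ?U) Y f"
    by (rule continuous_map_eq) (auto simp: gx(1))
  then show "\<exists>U. openin (gtop \<G>) U \<and> c \<in> U \<and> continuous_map (subtopology (gtop \<G>) U) Y f"
    using openin_germ_image[OF gx(1) openin_topspace] gx by blast
qed

lemma agree_near_iff_notin_supp:
  assumes g: "g \<in> \<Gamma>" and h: "h \<in> \<Gamma>" and y: "y \<in> topspace X"
  shows "agree_near X g h y \<longleftrightarrow> y \<notin> supp X (inv h \<circ> g)"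
proof -
  define M where "M = {z \<in> topspace X. (inv h \<circ> g) z \<noteq> z}"
  have "inv h (g z) = z \<longleftrightarrow> g z = h z" for z
    using h by (metis Gamma_apply_inv inv_Gamma_apply)
  then have M: "z \<in> M \<longleftrightarrow> z \<in> topspace X \<and> g z \<noteq> h z" for z
    by (simp add: M_def)
  have supp: "supp X (inv h \<circ> g) = X closure_of M" by (simp add: supp_def M_def)
  show ?thesis
  proof
    assume "agree_near X g h y"
    then obtain U where U: "openin X U" "y \<in> U" "\<forall>z\<in>U. g z = h z"
      unfolding agree_near_def by blast
    then have "U \<inter> M = {}" using M by blast
    then have "U \<inter> X closure_of M = {}" using openin_Int_closure_of_eq_empty[OF U(1)] by simp
    then show "y \<notin> supp X (inv h \<circ> g)" using U(2) supp by blast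
  next
    assume y_notin: "y \<notin> supp X (inv h \<circ> g)"
    show "agree_near X g h y"
    proof (rule agree_nearI)
      show "openin X (topspace X - X closure_of M)"
        by (simp add: openin_diff closedin_closure_of)
      show "y \<in> topspace X - X closure_of M" using y y_notin supp by simp
      fix z assume "z \<in> topspace X - X closure_of M"
      moreover have "M \<subseteq> X closure_of M" by (rule closure_of_subset) (simp add: M_def)
      ultimately show "g z = h z" using M by blast
    qed
  qed
qed

text \<open>The support of \<open>inv h \<circ> g\<close> is clopen (closed as a closure, open because elements of
  \<open>\<Gamma>\<close> have compact open support), and the germs of \<open>g\<close> and \<open>h\<close> differ exactly at its points.\<close>

lemma separate_germs_at_point:
  assumes g: "g \<in> \<Gamma>" and h: "h \<in> \<Gamma>" and x: "x \<in> topspace X"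
    and ne: "germ \<Gamma> X g x \<noteq> germ \<Gamma> X h x"
  obtains S where "openin X S" "x \<in> S" "disjnt (germ \<Gamma> X g ` S) (germ \<Gamma> X h ` S)"
proof
  let ?S = "supp X (inv h \<circ> g)"
  show "openin X ?S" using openin_supp Gamma_comp Gamma_inv g h by blast
  then have S: "?S \<subseteq> topspace X" using openin_subset by blast
  show "x \<in> ?S" using ne germ_eqI[OF g x] agree_near_iff_notin_supp[OF g h x] by blast
  show "disjnt (germ \<Gamma> X g ` ?S) (germ \<Gamma> X h ` ?S)"
    using S germ_eq_iff[OF g] agree_near_iff_notin_supp[OF g h]
    by (fastforce simp: disjnt_def)
qed

lemma Hausdorff_Germ: "Hausdorff_space (gtop \<G>)"
  unfolding Hausdorff_space_def
proof (intro allI impI)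
  fix c d assume "c \<in> topspace (gtop \<G>) \<and> d \<in> topspace (gtop \<G>) \<and> c \<noteq> d"
  then have "c \<in> garr \<G>" "d \<in> garr \<G>" "c \<noteq> d" by (simp_all add: topspace_Germ)
  obtain g x where gx: "g \<in> \<Gamma>" "x \<in> topspace X" "c = germ \<Gamma> X g x"
    using \<open>c \<in> garr \<G>\<close> by (rule garr_GermE)
  obtain h y where hy: "h \<in> \<Gamma>" "y \<in> topspace X" "d = germ \<Gamma> X h y"
    using \<open>d \<in> garr \<G>\<close> by (rule garr_GermE)
  show "\<exists>U V. openin (gtop \<G>) U \<and> openin (gtop \<G>) V \<and> c \<in> U \<and> d \<in> V \<and> disjnt U V"
  proof (cases "x = y")
    case False
    then obtain U V where UV: "openin X U" "openin X V" "x \<in> U" "y \<in> V" "disjnt U V"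
      using boolean_space_X gx hy unfolding boolean_space_def Hausdorff_space_def by blast
    let ?U = "{e \<in> topspace (gtop \<G>). germ_pt e \<in> U}"
    let ?V = "{e \<in> topspace (gtop \<G>). germ_pt e \<in> V}"
    have "openin (gtop \<G>) ?U" "openin (gtop \<G>) ?V"
      using openin_continuous_map_preimage[OF continuous_map_germ_pt] UV(1,2) by blast+
    moreover have "c \<in> ?U" "d \<in> ?V" using gx hy UV(3,4) by (simp_all add: topspace_Germ)
    moreover have "disjnt ?U ?V" using UV(5) by (auto simp: disjnt_def)
    ultimately show ?thesis by blast
  next
    case True
    then obtain S where "openin X S" "x \<in> S" "disjnt (germ \<Gamma> X g ` S) (germ \<Gamma> X h ` S)"
      using separate_germs_at_point[OF gx(1) hy(1) gx(2)] \<open>c \<noteq> d\<close> gx(3) hy(3) by metis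
    then show ?thesis
      using openin_germ_image gx hy True by blast
  qed
qed

lemma gunits_Germ: "gunits \<G> = germ \<Gamma> X id ` topspace X"
proof (intro equalityI subsetI)
  fix c assume "c \<in> gunits \<G>"
  then obtain d where "d \<in> garr \<G>" "c = gsrc \<G> d" unfolding gunits_def by blast
  then show "c \<in> germ \<Gamma> X id ` topspace X" by (auto elim: garr_GermE)
next
  fix c assume "c \<in> germ \<Gamma> X id ` topspace X"
  then obtain x where "x \<in> topspace X" "c = germ \<Gamma> X id x" by blast
  then have "c = gsrc \<G> c" "c \<in> garr \<G>" by simp_all
  then show "c \<in> gunits \<G>" unfolding gunits_def by blast
qed

lemma germ_in_isotropy_iff:
  "g \<in> \<Gamma> \<Longrightarrow> x \<in> topspace X \<Longrightarrow> germ \<Gamma> X g x \<in> isotropy \<G> \<longleftrightarrow> g x = x"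
  unfolding isotropy_def by auto

lemma effective_Germ: "effective \<G>"
  unfolding effective_def gunits_Germ
proof
  show "gtop \<G> interior_of isotropy \<G> \<subseteq> germ \<Gamma> X id ` topspace X"
  proof
    fix c assume "c \<in> gtop \<G> interior_of isotropy \<G>"
    then obtain W where W: "openin (gtop \<G>) W" "c \<in> W" "W \<subseteq> isotropy \<G>"
      unfolding interior_of_def by blast
    obtain g A where gA: "g \<in> \<Gamma>" "openin X A" "c \<in> germ \<Gamma> X g ` A" "germ \<Gamma> X g ` A \<subseteq> W"
      using openin_GermE[OF W(1,2)] .
    then obtain x where x: "x \<in> A" "c = germ \<Gamma> X g x" by blast
    have A: "A \<subseteq> topspace X" using gA(2) openin_subset by blast
    have "g y = id y" if "y \<in> A" for y
      using that gA(4) W(3) A germ_in_isotropy_iff[OF gA(1)] by auto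
    then have "c = germ \<Gamma> X id x"
      using x A germ_eqI[OF gA(1)] agree_nearI[OF gA(2) x(1)] by blast
    then show "c \<in> germ \<Gamma> X id ` topspace X" using x A by blast
  qed
  show "germ \<Gamma> X id ` topspace X \<subseteq> gtop \<G> interior_of isotropy \<G>"
    by (rule interior_of_maximal) (auto simp: openin_germ_image isotropy_def)
qed

lemma continuous_map_gsrc: "continuous_map (gtop \<G>) (gtop \<G>) (gsrc \<G>)"
proof (rule continuous_map_from_Germ)
  fix g assume "g \<in> \<Gamma>"
  then show "continuous_map X (gtop \<G>) (\<lambda>y. gsrc \<G> (germ \<Gamma> X g y))"
    by (intro continuous_map_eq[OF continuous_map_germ[OF Gamma_id]]) simp
qed

lemma continuous_map_grng: "continuous_map (gtop \<G>) (gtop \<G>) (grng \<G>)"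
proof (rule continuous_map_from_Germ)
  fix g assume "g \<in> \<Gamma>"
  then show "continuous_map X (gtop \<G>) (\<lambda>y. grng \<G> (germ \<Gamma> X g y))"
    by (intro continuous_map_eq[OF continuous_map_compose[OF Gamma_continuous
          continuous_map_germ[OF Gamma_id]]]) simp_all
qed

lemma continuous_map_ginv: "continuous_map (gtop \<G>) (gtop \<G>) (ginv \<G>)"
proof (rule continuous_map_from_Germ)
  fix g assume "g \<in> \<Gamma>"
  then show "continuous_map X (gtop \<G>) (\<lambda>y. ginv \<G> (germ \<Gamma> X g y))"
    by (intro continuous_map_eq[OF continuous_map_compose[OF Gamma_continuous
          continuous_map_germ[OF Gamma_inv]]]) simp_all
qed

lemma composable_GermE:
  assumes "(c, d) \<in> composable \<G>"
  obtains g h y where "g \<in> \<Gamma>" "h \<in> \<Gamma>" "y \<in> topspace X"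
    "c = germ \<Gamma> X g (h y)" "d = germ \<Gamma> X h y"
proof -
  obtain g x where g: "g \<in> \<Gamma>" "x \<in> topspace X" "c = germ \<Gamma> X g x"
    using assms by (auto simp: composable_def elim: garr_GermE)
  obtain h y where h: "h \<in> \<Gamma>" "y \<in> topspace X" "d = germ \<Gamma> X h y"
    using assms by (auto simp: composable_def elim: garr_GermE)
  have "x = h y" using assms g h by (simp add: composable_def)
  then show ?thesis using that g h by blast
qed

lemma continuous_map_gmul:
  "continuous_map (subtopology (prod_topology (gtop \<G>) (gtop \<G>)) (composable \<G>)) (gtop \<G>)
     (\<lambda>(c, d). gmul \<G> c d)"
proof (rule continuous_map_locally)
  let ?C = "subtopology (prod_topology (gtop \<G>) (gtop \<G>)) (composable \<G>)"
  fix p assume "p \<in> topspace ?C"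
  then obtain g h y where gh: "g \<in> \<Gamma>" "h \<in> \<Gamma>" "y \<in> topspace X"
    and p: "p = (germ \<Gamma> X g (h y), germ \<Gamma> X h y)"
    by (metis IntD2 composable_GermE prod.collapse topspace_subtopology)
  let ?U = "composable \<G> \<inter> (germ \<Gamma> X g ` topspace X \<times> germ \<Gamma> X h ` topspace X)"
  have "openin ?C ?U"
    using openin_germ_image[OF gh(1) openin_topspace] openin_germ_image[OF gh(2) openin_topspace]
    by (intro openin_subtopology_Int2) (simp add: openin_prod_Times_iff)
  moreover have "p \<in> ?U" using gh p by (simp add: composable_def)
  moreover have "continuous_map (subtopology ?C ?U) (gtop \<G>) (\<lambda>(c, d). gmul \<G> c d)"
  proof (rule continuous_map_eq)
    have "continuous_map (subtopology ?C ?U) (gtop \<G>) snd"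
      by (intro continuous_map_from_subtopology continuous_map_snd)
    then show "continuous_map (subtopology ?C ?U) (gtop \<G>) (germ \<Gamma> X (g \<circ> h) \<circ> (germ_pt \<circ> snd))"
      using continuous_map_germ_pt continuous_map_germ[OF Gamma_comp[OF gh(1,2)]]
      by (intro continuous_map_compose)
    fix q assume "q \<in> topspace (subtopology ?C ?U)"
    then obtain z y' where "z \<in> topspace X" "y' \<in> topspace X"
      "q = (germ \<Gamma> X g z, germ \<Gamma> X h y')" "z = h y'"
      using gh by (auto simp: composable_def)
    then show "(germ \<Gamma> X (g \<circ> h) \<circ> (germ_pt \<circ> snd)) q = (\<lambda>(c, d). gmul \<G> c d) q"
      using gh by simp
  qed
  ultimately show "\<exists>U. openin ?C U \<and> p \<in> U \<and> continuous_map (subtopology ?C U) (gtop \<G>) (\<lambda>(c, d). gmul \<G> c d)"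
    by blast
qed

lemma top_groupoid_Germ: "top_groupoid \<G>"
  unfolding top_groupoid_def
  using groupoid_Germ topspace_Germ continuous_map_gsrc continuous_map_grng continuous_map_ginv
    continuous_map_gmul by blast

lemma homeomorphic_map_gsrc_germ_image:
  assumes "g \<in> \<Gamma>"
  shows "homeomorphic_map (subtopology (gtop \<G>) (germ \<Gamma> X g ` topspace X))
           (subtopology (gtop \<G>) (gunits \<G>)) (gsrc \<G>)"
proof -
  have "homeomorphic_map (subtopology (gtop \<G>) (germ \<Gamma> X g ` topspace X)) X germ_pt"
    using homeomorphic_maps_germ_image[OF assms order_refl] homeomorphic_maps_map by fastforce
  moreover have "homeomorphic_map X (subtopology (gtop \<G>) (gunits \<G>)) (germ \<Gamma> X id)"
    using homeomorphic_maps_germ_image[OF Gamma_id order_refl] homeomorphic_maps_map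
    by (fastforce simp: gunits_Germ)
  ultimately show ?thesis
    by (rule homeomorphic_map_eq[OF homeomorphic_map_compose]) (auto simp: assms)
qed

lemma etale_groupoid_Germ: "etale_groupoid \<G>"
  unfolding etale_groupoid_def local_homeo_def
proof (intro conjI top_groupoid_Germ ballI)
  show "continuous_map (gtop \<G>) (subtopology (gtop \<G>) (gunits \<G>)) (gsrc \<G>)"
    using continuous_map_gsrc by (auto simp: continuous_map_in_subtopology gunits_def topspace_Germ)
  fix c assume "c \<in> topspace (gtop \<G>)"
  then obtain g x where gx: "g \<in> \<Gamma>" "x \<in> topspace X" "c = germ \<Gamma> X g x"
    by (auto simp: topspace_Germ elim: garr_GermE)
  let ?U = "germ \<Gamma> X g ` topspace X"
  have image: "gsrc \<G> ` ?U = gunits \<G>" using gx(1) by (force simp: gunits_Germ)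
  have "openin (subtopology (gtop \<G>) (gunits \<G>)) (gunits \<G>)"
    using openin_germ_image[OF Gamma_id openin_topspace]
    by (auto simp: gunits_Germ openin_subtopology_refl topspace_Germ)
  moreover have "subtopology (subtopology (gtop \<G>) (gunits \<G>)) (gunits \<G>) = subtopology (gtop \<G>) (gunits \<G>)"
    by (simp add: subtopology_subtopology)
  ultimately show "\<exists>U. openin (gtop \<G>) U \<and> c \<in> U \<and>
      openin (subtopology (gtop \<G>) (gunits \<G>)) (gsrc \<G> ` U) \<and>
      homeomorphic_map (subtopology (gtop \<G>) U)
        (subtopology (subtopology (gtop \<G>) (gunits \<G>)) (gsrc \<G> ` U)) (gsrc \<G>)"
    using openin_germ_image[OF gx(1) openin_topspace] gx homeomorphic_map_gsrc_germ_image image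
    by auto
qed

lemma ample_Germ: "ample \<G>"
  unfolding ample_def
proof
  show "etale_groupoid \<G>" by (rule etale_groupoid_Germ)
  have "homeomorphic_map X (subtopology (gtop \<G>) (gunits \<G>)) (germ \<Gamma> X id)"
    using homeomorphic_maps_germ_image[OF Gamma_id order_refl] homeomorphic_maps_map
    by (fastforce simp: gunits_Germ)
  then show "boolean_space (subtopology (gtop \<G>) (gunits \<G>))"
    using boolean_space_homeomorphic_image boolean_space_X by blast
qed

lemma gpoid_obj_Germ: "gpoid_obj \<G>"
  unfolding gpoid_obj_def using ample_Germ effective_Germ Hausdorff_Germ by blast

end

section \<open>Functoriality\<close>

lemma spatg_morD:
  assumes "spatg_mor \<Gamma>1 X1 \<Gamma>2 X2 \<phi>"
  shows "continuous_map X1 X2 \<phi>" "open_map X1 X2 \<phi>"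
    "\<forall>g\<in>\<Gamma>1. \<exists>g'\<in>\<Gamma>2. intertwines X1 \<phi> g g'"
  using assms local_homeo_imp_open_map by (auto simp: spatg_mor_def local_homeo_def)

lemma Germ_map_id:
  assumes "c \<in> garr (Germ \<Gamma> X)"
  shows "Germ_map \<Gamma> X \<Gamma> X id c = c"
proof -
  obtain g x where g: "g \<in> \<Gamma>" "x \<in> topspace X" "c = germ \<Gamma> X g x"
    using assms by (rule garr_GermE)
  have "\<forall>g\<in>\<Gamma>. \<exists>g'\<in>\<Gamma>. intertwines X id g g'" using intertwines_id by blast
  then show ?thesis
    using Germ_map_germ[OF continuous_map_id open_map_id _ g(1,2) g(1) intertwines_id] g(3) by simp
qed

lemma Germ_map_compose:
  assumes \<phi>: "spatg_mor \<Gamma>1 X1 \<Gamma>2 X2 \<phi>" and \<psi>: "spatg_mor \<Gamma>2 X2 \<Gamma>3 X3 \<psi>"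
    and c: "c \<in> garr (Germ \<Gamma>1 X1)"
  shows "Germ_map \<Gamma>1 X1 \<Gamma>3 X3 (\<psi> \<circ> \<phi>) c = Germ_map \<Gamma>2 X2 \<Gamma>3 X3 \<psi> (Germ_map \<Gamma>1 X1 \<Gamma>2 X2 \<phi> c)"
proof -
  note \<phi>D = spatg_morD[OF \<phi>] and \<psi>D = spatg_morD[OF \<psi>]
  have \<phi>_topspace: "\<phi> \<in> topspace X1 \<rightarrow> topspace X2"
    using continuous_map_funspace[OF \<phi>D(1)] .
  have intertwiners: "\<forall>g\<in>\<Gamma>1. \<exists>g''\<in>\<Gamma>3. intertwines X1 (\<psi> \<circ> \<phi>) g g''"
    using \<phi>D(3) \<psi>D(3) intertwines_compose_maps[OF _ _ \<phi>_topspace] by metis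
  obtain g x where g: "g \<in> \<Gamma>1" "x \<in> topspace X1" "c = germ \<Gamma>1 X1 g x"
    using c by (rule garr_GermE)
  obtain g' where g': "g' \<in> \<Gamma>2" "intertwines X1 \<phi> g g'" using \<phi>D(3) g(1) by blast
  obtain g'' where g'': "g'' \<in> \<Gamma>3" "intertwines X2 \<psi> g' g''" using \<psi>D(3) g'(1) by blast
  have "Germ_map \<Gamma>1 X1 \<Gamma>3 X3 (\<psi> \<circ> \<phi>) c = germ \<Gamma>3 X3 g'' (\<psi> (\<phi> x))"
    using Germ_map_germ[OF continuous_map_compose[OF \<phi>D(1) \<psi>D(1)] open_map_compose[OF \<phi>D(2) \<psi>D(2)]
        intertwiners g(1,2) g''(1) intertwines_compose_maps[OF g'(2) g''(2) \<phi>_topspace]] g(3)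
    by simp
  also have "\<dots> = Germ_map \<Gamma>2 X2 \<Gamma>3 X3 \<psi> (germ \<Gamma>2 X2 g' (\<phi> x))"
    using Germ_map_germ[OF \<psi>D g'(1) _ g''] \<phi>_topspace g(2) by auto
  also have "\<dots> = Germ_map \<Gamma>2 X2 \<Gamma>3 X3 \<psi> (Germ_map \<Gamma>1 X1 \<Gamma>2 X2 \<phi> c)"
    using Germ_map_germ[OF \<phi>D g(1,2) g'] g(3) by simp
  finally show ?thesis .
qed

locale spatg_morphism = G1: spatg_object \<Gamma>1 X1 + G2: spatg_object \<Gamma>2 X2
  for \<Gamma>1 :: "('a \<Rightarrow> 'a) set" and X1 and \<Gamma>2 :: "('b \<Rightarrow> 'b) set" and X2 +
  fixes \<phi> :: "'a \<Rightarrow> 'b"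
  assumes spatg_mor: "spatg_mor \<Gamma>1 X1 \<Gamma>2 X2 \<phi>"
begin

abbreviation "Germ_\<phi> \<equiv> Germ_map \<Gamma>1 X1 \<Gamma>2 X2 \<phi>"

lemma phi_in_topspace [simp]: "x \<in> topspace X1 \<Longrightarrow> \<phi> x \<in> topspace X2"
  using continuous_map_image_subset_topspace spatg_morD(1)[OF spatg_mor] by blast

lemma intertwinerE:
  assumes "g \<in> \<Gamma>1"
  obtains g' where "g' \<in> \<Gamma>2" "intertwines X1 \<phi> g g'"
  using spatg_morD(3)[OF spatg_mor] assms by blast

lemma Germ_phi_germ: "g \<in> \<Gamma>1 \<Longrightarrow> x \<in> topspace X1 \<Longrightarrow> g' \<in> \<Gamma>2 \<Longrightarrow> intertwines X1 \<phi> g g' \<Longrightarrow>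
    Germ_\<phi> (germ \<Gamma>1 X1 g x) = germ \<Gamma>2 X2 g' (\<phi> x)"
  using Germ_map_germ[OF spatg_morD[OF spatg_mor]] by blast

lemma groupoid_hom_Germ_map: "groupoid_hom G1.\<G> G2.\<G> Germ_\<phi>"
  unfolding groupoid_hom_def ball_garr_Germ
proof (intro conjI ballI impI)
  fix g x assume g: "g \<in> \<Gamma>1" "x \<in> topspace X1"
  obtain g' where g': "g' \<in> \<Gamma>2" "intertwines X1 \<phi> g g'" using g(1) by (rule intertwinerE)
  show "Germ_\<phi> (germ \<Gamma>1 X1 g x) \<in> garr G2.\<G>" using Germ_phi_germ[OF g g'] g' g by simp
next
  fix g x h y assume g: "g \<in> \<Gamma>1" "x \<in> topspace X1" and h: "h \<in> \<Gamma>1" "y \<in> topspace X1"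
    and "gsrc G1.\<G> (germ \<Gamma>1 X1 g x) = grng G1.\<G> (germ \<Gamma>1 X1 h y)"
  then have x: "x = h y" by simp
  obtain g' where g': "g' \<in> \<Gamma>2" "intertwines X1 \<phi> g g'" using g(1) by (rule intertwinerE)
  obtain h' where h': "h' \<in> \<Gamma>2" "intertwines X1 \<phi> h h'" using h(1) by (rule intertwinerE)
  have \<phi>x: "\<phi> x = h' (\<phi> y)" using h'(2) h(2) x by (simp add: intertwines_def)
  have "intertwines X1 \<phi> (g \<circ> h) (g' \<circ> h')"
    using intertwines_compose[OF g'(2) h'(2)] h(1) by (simp add: Pi_iff)
  then have Germ_phi_gh: "Germ_\<phi> (germ \<Gamma>1 X1 (g \<circ> h) y) = germ \<Gamma>2 X2 (g' \<circ> h') (\<phi> y)"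
    using Germ_phi_germ[OF G1.Gamma_comp[OF g(1) h(1)] h(2) G2.Gamma_comp[OF g'(1) h'(1)]] by blast
  note Fg = Germ_phi_germ[OF g g'] and Fh = Germ_phi_germ[OF h h']
  show "gsrc G2.\<G> (Germ_\<phi> (germ \<Gamma>1 X1 g x)) = grng G2.\<G> (Germ_\<phi> (germ \<Gamma>1 X1 h y))"
    using g h g' h' \<phi>x by (simp add: Fg Fh)
  have "gmul G1.\<G> (germ \<Gamma>1 X1 g x) (germ \<Gamma>1 X1 h y) = germ \<Gamma>1 X1 (g \<circ> h) y"
    using g h x by simp
  then show "Germ_\<phi> (gmul G1.\<G> (germ \<Gamma>1 X1 g x) (germ \<Gamma>1 X1 h y))
      = gmul G2.\<G> (Germ_\<phi> (germ \<Gamma>1 X1 g x)) (Germ_\<phi> (germ \<Gamma>1 X1 h y))"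
    using h g' h' by (simp add: Fg Fh Germ_phi_gh \<phi>x)
qed

lemma continuous_map_Germ_map: "continuous_map (gtop G1.\<G>) (gtop G2.\<G>) Germ_\<phi>"
proof (rule G1.continuous_map_from_Germ)
  fix g assume g: "g \<in> \<Gamma>1"
  then obtain g' where g': "g' \<in> \<Gamma>2" "intertwines X1 \<phi> g g'" by (rule intertwinerE)
  show "continuous_map X1 (gtop G2.\<G>) (\<lambda>y. Germ_\<phi> (germ \<Gamma>1 X1 g y))"
    by (rule continuous_map_eq[OF continuous_map_compose[OF spatg_morD(1)[OF spatg_mor]
          G2.continuous_map_germ[OF g'(1)]]]) (simp add: Germ_phi_germ[OF g _ g'])
qed

lemma local_homeo_Germ_map: "local_homeo (gtop G1.\<G>) (gtop G2.\<G>) Germ_\<phi>"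
  unfolding local_homeo_def
proof (intro conjI continuous_map_Germ_map ballI)
  fix c assume "c \<in> topspace (gtop G1.\<G>)"
  then obtain g x where g: "g \<in> \<Gamma>1" "x \<in> topspace X1" "c = germ \<Gamma>1 X1 g x"
    by (auto simp: G1.topspace_Germ elim: garr_GermE)
  obtain g' where g': "g' \<in> \<Gamma>2" "intertwines X1 \<phi> g g'" using g(1) by (rule intertwinerE)
  obtain U where U: "openin X1 U" "x \<in> U" "openin X2 (\<phi> ` U)"
      "homeomorphic_map (subtopology X1 U) (subtopology X2 (\<phi> ` U)) \<phi>"
    using spatg_mor g(2) unfolding spatg_mor_def local_homeo_def by blast
  have U_sub: "U \<subseteq> topspace X1" "\<phi> ` U \<subseteq> topspace X2"
    using U(1,3) openin_subset by blast+
  have Germ_phi_U: "Germ_\<phi> (germ \<Gamma>1 X1 g y) = germ \<Gamma>2 X2 g' (\<phi> y)" if "y \<in> U" for y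
    using Germ_phi_germ[OF g(1) _ g'] that U_sub(1) by blast
  then have image: "Germ_\<phi> ` germ \<Gamma>1 X1 g ` U = germ \<Gamma>2 X2 g' ` \<phi> ` U"
    by (simp add: image_image)
  have "homeomorphic_map (subtopology (gtop G1.\<G>) (germ \<Gamma>1 X1 g ` U))
      (subtopology (gtop G2.\<G>) (germ \<Gamma>2 X2 g' ` \<phi> ` U)) (germ \<Gamma>2 X2 g' \<circ> (\<phi> \<circ> germ_pt))"
    using G1.homeomorphic_maps_germ_image[OF g(1) U_sub(1)]
      G2.homeomorphic_maps_germ_image[OF g'(1) U_sub(2)] U(4)
    by (meson homeomorphic_map_compose homeomorphic_maps_map)
  then have "homeomorphic_map (subtopology (gtop G1.\<G>) (germ \<Gamma>1 X1 g ` U))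
      (subtopology (gtop G2.\<G>) (Germ_\<phi> ` germ \<Gamma>1 X1 g ` U)) Germ_\<phi>"
    unfolding image
  proof (rule homeomorphic_map_eq)
    fix e assume "e \<in> topspace (subtopology (gtop G1.\<G>) (germ \<Gamma>1 X1 g ` U))"
    then obtain y where "y \<in> U" "e = germ \<Gamma>1 X1 g y" by auto
    then show "(germ \<Gamma>2 X2 g' \<circ> (\<phi> \<circ> germ_pt)) e = Germ_\<phi> e"
      using Germ_phi_U g(1) U_sub(1) by auto
  qed
  then show "\<exists>W. openin (gtop G1.\<G>) W \<and> c \<in> W \<and> openin (gtop G2.\<G>) (Germ_\<phi> ` W) \<and>
      homeomorphic_map (subtopology (gtop G1.\<G>) W) (subtopology (gtop G2.\<G>) (Germ_\<phi> ` W)) Germ_\<phi>"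
    using G1.openin_germ_image[OF g(1) U(1)] G2.openin_germ_image[OF g'(1) U(3)] image g U(2)
    by auto
qed

lemma etale_hom_Germ_map: "etale_hom G1.\<G> G2.\<G> Germ_\<phi>"
  unfolding etale_hom_def using groupoid_hom_Germ_map local_homeo_Germ_map by blast

end

theorem proposition5p3:
  fixes \<Gamma>1 :: "('a \<Rightarrow> 'a) set" and X1 :: "'a topology"
    and \<Gamma>2 :: "('b \<Rightarrow> 'b) set" and X2 :: "'b topology"
    and \<Gamma>3 :: "('c \<Rightarrow> 'c) set" and X3 :: "'c topology"
    and \<phi> :: "'a \<Rightarrow> 'b" and \<psi> :: "'b \<Rightarrow> 'c"
  assumes obj1: "spatg_obj \<Gamma>1 X1" and obj2: "spatg_obj \<Gamma>2 X2" and obj3: "spatg_obj \<Gamma>3 X3"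
    and mor_phi: "spatg_mor \<Gamma>1 X1 \<Gamma>2 X2 \<phi>"
    and mor_psi: "spatg_mor \<Gamma>2 X2 \<Gamma>3 X3 \<psi>"
  shows
    \<comment> \<open>well-definedness: the value on [g,x] is [g', phi x] for every choice of representative and of g'\<close>
    "(\<forall>g\<in>\<Gamma>1. \<forall>x\<in>topspace X1. \<forall>g'\<in>\<Gamma>2. intertwines X1 \<phi> g g' \<longrightarrow>
        Germ_map \<Gamma>1 X1 \<Gamma>2 X2 \<phi> (germ \<Gamma>1 X1 g x) = germ \<Gamma>2 X2 g' (\<phi> x))
     \<comment> \<open>Germ sends objects of SpatG to objects of Gpoid\<close>
     \<and> gpoid_obj (Germ \<Gamma>1 X1)
     \<comment> \<open>Germ(phi) is an etale homomorphism\<close>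
     \<and> etale_hom (Germ \<Gamma>1 X1) (Germ \<Gamma>2 X2) (Germ_map \<Gamma>1 X1 \<Gamma>2 X2 \<phi>)
     \<comment> \<open>functoriality: identities\<close>
     \<and> (\<forall>c\<in>garr (Germ \<Gamma>1 X1). Germ_map \<Gamma>1 X1 \<Gamma>1 X1 id c = c)
     \<comment> \<open>functoriality: composition\<close>
     \<and> (\<forall>c\<in>garr (Germ \<Gamma>1 X1).
          Germ_map \<Gamma>1 X1 \<Gamma>3 X3 (\<psi> \<circ> \<phi>) c
            = Germ_map \<Gamma>2 X2 \<Gamma>3 X3 \<psi> (Germ_map \<Gamma>1 X1 \<Gamma>2 X2 \<phi> c))"
proof -
  interpret spatg_morphism \<Gamma>1 X1 \<Gamma>2 X2 \<phi>
    using obj1 obj2 mor_phi by unfold_locales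
  show ?thesis
    using Germ_phi_germ G1.gpoid_obj_Germ etale_hom_Germ_map Germ_map_id Germ_map_compose[OF mor_phi mor_psi]
    by blast
qed

end
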